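(* Let $p>3$ be a prime and let $L_1(x),L_2(x),L_3(x)\in\mathbb{F}_{p^r}[x]$ be additive polynomials. If $A(x)=L_1(x)L_2(x)L_3(x)$ is an Alltop polynomial on $\mathbb{F}_{p^r}$, then $L_1(x),L_2(x),L_3(x)$ are all permutation polynomials of $\mathbb{F}_{p^r}$.
   Context: For $f:\mathbb{F}_{p^r}\to\mathbb{F}_{p^r}$ and $a\in\mathbb{F}_{p^r}$, $\Delta_{f,a}(x)=f(x+a)-f(x)$. A function $f$ is planar if for every $a\in\mathbb{F}_{p^r}^*$ the map $x\mapsto\Delta_{f,a}(x)$ is a bijection; $A$ is an Alltop polynomial if $\Delta_{A,a}$ is planar for every $a\in\mathbb{F}_{p^r}^*$. A polynomial $L$ is additive if $L(x+y)=L(x)+L(y)$ for all $x,y\in\mathbb{F}_{p^r}$. *)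

theory Defs
  imports "HOL-Computational_Algebra.Polynomial"
begin

definition diff_op :: "('a::ring \<Rightarrow> 'a) \<Rightarrow> 'a \<Rightarrow> 'a \<Rightarrow> 'a" where
  "diff_op f a = (\<lambda>x. f (x + a) - f x)"

definition planar :: "('a::ring \<Rightarrow> 'a) \<Rightarrow> bool" where
  "planar f \<longleftrightarrow> (\<forall>a. a \<noteq> 0 \<longrightarrow> bij (diff_op f a))"

definition alltop :: "('a::ring \<Rightarrow> 'a) \<Rightarrow> bool" where
  "alltop A \<longleftrightarrow> (\<forall>a. a \<noteq> 0 \<longrightarrow> planar (diff_op A a))"

definition additive_poly :: "'a::comm_ring poly \<Rightarrow> bool" where
  "additive_poly L \<longleftrightarrow> (\<forall>x y. poly L (x + y) = poly L x + poly L y)"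

definition permutation_poly :: "'a::comm_ring poly \<Rightarrow> bool" where
  "permutation_poly L \<longleftrightarrow> bij (poly L)"

end

theory Submission
  imports Defs
begin

text \<open>If an additive \<open>L\<close> is not a permutation, it has a root \<open>a \<noteq> 0\<close>, so \<open>A = L1 L2 L3\<close>
  vanishes at \<open>0, a, 2a, 3a\<close>. Then the second difference \<open>\<Delta>\<^sub>a\<Delta>\<^sub>a A\<close> takes the value \<open>0\<close> at both
  \<open>0\<close> and \<open>a\<close>, so it is not injective, contradicting that \<open>\<Delta>\<^sub>a A\<close> is planar.\<close>

lemma alltop_not_vanishing_on_progression:
  fixes A :: "'a::ring \<Rightarrow> 'a"
  assumes "alltop A" and "a \<noteq> 0"
    and "A 0 = 0" "A a = 0" "A (a + a) = 0" "A (a + a + a) = 0"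
  shows False
proof -
  have "inj (diff_op (diff_op A a) a)"
    using assms(1,2) bij_is_inj unfolding alltop_def planar_def by blast
  moreover have "diff_op (diff_op A a) a 0 = diff_op (diff_op A a) a a"
    using assms(3-6) by (simp add: diff_op_def add.assoc)
  ultimately show False
    using assms(2) by (metis injD)
qed

lemma additive_poly_add:
  "additive_poly L \<Longrightarrow> poly L (x + y) = poly L x + poly L y"
  unfolding additive_poly_def by blast

lemma additive_poly_root_0:
  "additive_poly L \<Longrightarrow> poly L 0 = 0"
  using additive_poly_add[of L 0 0] by simp

lemma additive_poly_nonzero_root:
  fixes L :: "'a::{comm_ring, finite} poly"
  assumes "additive_poly L" and "\<not> permutation_poly L"
  obtains a where "a \<noteq> 0" and "poly L a = 0"
proof -
  have "\<not> inj (poly L)"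
    using assms(2) finite_UNIV_inj_surj unfolding permutation_poly_def bij_def
    by (metis finite_UNIV)
  then obtain x y where "x \<noteq> y" and "poly L x = poly L y"
    unfolding inj_def by blast
  moreover have "poly L x = poly L (x - y) + poly L y"
    using additive_poly_add[OF assms(1), of "x - y" y] by simp
  ultimately show thesis
    using that[of "x - y"] by simp
qed

lemma permutation_poly_if_alltop_mult:
  fixes L M :: "'a::{comm_ring, finite} poly"
  assumes "additive_poly L" and "alltop (poly (L * M))"
  shows "permutation_poly L"
proof (rule ccontr)
  assume "\<not> permutation_poly L"
  then obtain a where "a \<noteq> 0" and root: "poly L a = 0"
    using additive_poly_nonzero_root[OF assms(1)] by blast
  have "poly L (a + a) = 0" "poly L (a + a + a) = 0"
    using root additive_poly_add[OF assms(1), of a a]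
      additive_poly_add[OF assms(1), of "a + a" a]
    by simp_all
  then show False
    using alltop_not_vanishing_on_progression[OF assms(2) \<open>a \<noteq> 0\<close>]
      additive_poly_root_0[OF assms(1)] root
    by simp
qed

theorem theorem3:
  fixes L1 L2 L3 :: "'a::{field, finite} poly" and p r :: nat
  assumes "prime p" and "p > 3" and "card (UNIV :: 'a set) = p ^ r"
    and "additive_poly L1" and "additive_poly L2" and "additive_poly L3"
    and "alltop (poly (L1 * L2 * L3))"
  shows "permutation_poly L1 \<and> permutation_poly L2 \<and> permutation_poly L3"
proof -
  have "L1 * L2 * L3 = L1 * (L2 * L3)" "L1 * L2 * L3 = L2 * (L1 * L3)"
    "L1 * L2 * L3 = L3 * (L1 * L2)"
    by (simp_all add: ac_simps)
  then show ?thesis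
    using assms(4-7) permutation_poly_if_alltop_mult by metis
qed

end
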